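(* Consider the three-dimensional real Lie algebra $\mathfrak{g}$ spanned by the vector fields $$\Pi_1=x\frac{\partial}{\partial x}+y\frac{\partial}{\partial y},\qquad \Pi_2=-x\frac{\partial}{\partial x}+x\frac{\partial}{\partial y},\qquad \Pi_3=x^2\frac{\partial}{\partial x}+xy\frac{\partial}{\partial y},$$ which is the Lie algebra of point symmetries of the equation $y_{xx}=-\frac{y_x^2}{x+y}-\frac{2yy_x}{x(x+y)}-\frac{y^2}{x^2(x+y)}$. An optimal system of one-dimensional subalgebras of $\mathfrak{g}$ is given by the subalgebras generated by $$\Pi_1+\Pi_2,\qquad \Pi_1+b_2\Pi_3,\qquad a_1\Pi_1+a_2\Pi_2\ \ (a_1\neq a_2),\qquad a_1\Pi_1+a_1\Pi_2+\Pi_3,\qquad a_1\Pi_1+a_2\Pi_2+\Pi_3\ \ (a_1\neq 1),$$ where $a_1,a_2,b_2$ are real parameters.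
   Context: The Lie brackets of $\mathfrak{g}$ are $[\Pi_1,\Pi_2]=0$, $[\Pi_1,\Pi_3]=\Pi_3$, $[\Pi_2,\Pi_3]=-\Pi_3$. An optimal system of one-dimensional subalgebras is a list of elements of $\mathfrak{g}$ such that every nonzero element $G=a_1\Pi_1+a_2\Pi_2+a_3\Pi_3$ of $\mathfrak{g}$ is mapped, up to a nonzero scalar multiple, to an element of the list by some composition of adjoint maps $\mathrm{Ad}(\exp(\lambda\Pi))G=\sum_{n\ge0}\frac{\lambda^n}{n!}(\mathrm{ad}\,\Pi)^nG$, $\Pi\in\mathfrak{g}$, $\lambda\in\mathbb{R}$. *)

theory Defs
  imports "HOL-Analysis.Analysis"
begin

text \<open>Elements of the Lie algebra g are represented by their coordinates
  (a1,a2,a3) with respect to the basis Pi1, Pi2, Pi3.\<close>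

type_synonym lalg = "real \<times> real \<times> real"

definition Pi1 :: lalg where "Pi1 = (1, 0, 0)"
definition Pi2 :: lalg where "Pi2 = (0, 1, 0)"
definition Pi3 :: lalg where "Pi3 = (0, 0, 1)"

text \<open>The bilinear Lie bracket determined by [Pi1,Pi2]=0, [Pi1,Pi3]=Pi3, [Pi2,Pi3]=-Pi3.\<close>
definition lie :: "lalg \<Rightarrow> lalg \<Rightarrow> lalg" where
  "lie a b = (case a of (a1, a2, a3) \<Rightarrow> case b of (b1, b2, b3) \<Rightarrow>
      (0, 0, a1 * b3 - a3 * b1 - a2 * b3 + a3 * b2))"

lemma lie_basis:
  "lie Pi1 Pi2 = 0" "lie Pi1 Pi3 = Pi3" "lie Pi2 Pi3 = - Pi3"
  by (simp_all add: lie_def Pi1_def Pi2_def Pi3_def zero_prod_def)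

definition Ad :: "lalg \<Rightarrow> real \<Rightarrow> lalg \<Rightarrow> lalg" where
  "Ad P l G = (\<Sum>n. (l ^ n / fact n) *\<^sub>R (((lie P) ^^ n) G))"

definition Ad_comp :: "(lalg \<times> real) list \<Rightarrow> lalg \<Rightarrow> lalg" where
  "Ad_comp ps G = foldr (\<lambda>(P, l) H. Ad P l H) ps G"

definition optimal_system :: "lalg set \<Rightarrow> bool" where
  "optimal_system S \<longleftrightarrow>
     (\<forall>G. G \<noteq> 0 \<longrightarrow> (\<exists>ps k L. k \<noteq> 0 \<and> L \<in> S \<and> Ad_comp ps G = k *\<^sub>R L))"

end

theory Submission
  imports Defs
begin

text \<open>Since \<open>ad Pi3\<close> squares to zero, \<open>Ad(exp(l Pi3))\<close> just adds \<open>l (a2 - a1) Pi3\<close>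
  to \<open>a1 Pi1 + a2 Pi2 + a3 Pi3\<close>. If \<open>a1 \<noteq> a2\<close> this kills the \<open>Pi3\<close>-component;
  if \<open>a1 = a2\<close> the element is already a multiple of \<open>Pi1 + Pi2\<close> or of
  \<open>a Pi1 + a Pi2 + Pi3\<close>. So the third, first and fourth families already meet every
  orbit; the other two families are redundant.\<close>

lemma lie_Pi3: "lie Pi3 (a, b, c) = (0, 0, b - a)"
  by (simp add: lie_def Pi3_def)

lemma funpow_lie_Pi3_eq_0:
  assumes "n \<ge> 2"
  shows "(lie Pi3 ^^ n) G = 0"
  using assms
proof (induction n rule: dec_induct)
  case base
  obtain a b c where "G = (a, b, c)" by (cases G)
  then show ?case by (simp add: lie_Pi3 numeral_2_eq_2 zero_prod_def)
next
  case (step n)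
  then show ?case by (simp add: lie_Pi3 zero_prod_def)
qed

lemma Ad_Pi3: "Ad Pi3 l (a, b, c) = (a, b, c + l * (b - a))"
proof -
  have "Ad Pi3 l (a, b, c) = (\<Sum>n\<in>{0, 1}. (l ^ n / fact n) *\<^sub>R ((lie Pi3 ^^ n) (a, b, c)))"
    unfolding Ad_def by (rule suminf_finite) (auto simp: funpow_lie_Pi3_eq_0)
  then show ?thesis by (simp add: lie_Pi3)
qed

lemma Ad_comp_Pi3_eliminates_Pi3:
  assumes "a \<noteq> b"
  shows "Ad_comp [(Pi3, c / (a - b))] (a, b, c) = a *\<^sub>R Pi1 + b *\<^sub>R Pi2"
  using assms by (simp add: Ad_comp_def Ad_Pi3 Pi1_def Pi2_def field_simps)

lemma Ad_comp_Nil: "Ad_comp [] G = G"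
  by (simp add: Ad_comp_def)

theorem proposition2:
  shows "optimal_system
    ({Pi1 + Pi2}
     \<union> {Pi1 + b2 *\<^sub>R Pi3 | b2. True}
     \<union> {a1 *\<^sub>R Pi1 + a2 *\<^sub>R Pi2 | a1 a2. a1 \<noteq> a2}
     \<union> {a1 *\<^sub>R Pi1 + a1 *\<^sub>R Pi2 + Pi3 | a1. True}
     \<union> {a1 *\<^sub>R Pi1 + a2 *\<^sub>R Pi2 + Pi3 | a1 a2. a1 \<noteq> 1})"
  (is "optimal_system ?S")
  unfolding optimal_system_def
proof (intro allI impI)
  fix G :: lalg
  assume "G \<noteq> 0"
  obtain a b c where G: "G = (a, b, c)" by (cases G)
  consider "a \<noteq> b" | "a = b" "c = 0" | "a = b" "c \<noteq> 0" by blast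
  then show "\<exists>ps k L. k \<noteq> 0 \<and> L \<in> ?S \<and> Ad_comp ps G = k *\<^sub>R L"
  proof cases
    case 1
    then show ?thesis
      by (intro exI[of _ "[(Pi3, c / (a - b))]"] exI[of _ 1] exI[of _ "a *\<^sub>R Pi1 + b *\<^sub>R Pi2"])
        (auto simp: G Ad_comp_Pi3_eliminates_Pi3)
  next
    case 2
    with \<open>G \<noteq> 0\<close> have "a \<noteq> 0" by (auto simp: G zero_prod_def)
    with 2 show ?thesis
      by (intro exI[of _ "[]"] exI[of _ a] exI[of _ "Pi1 + Pi2"])
        (simp add: G Ad_comp_Nil Pi1_def Pi2_def)
  next
    case 3
    then show ?thesis
      by (intro exI[of _ "[]"] exI[of _ c] exI[of _ "(a / c) *\<^sub>R Pi1 + (a / c) *\<^sub>R Pi2 + Pi3"])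
        (auto simp: G Ad_comp_Nil Pi1_def Pi2_def Pi3_def)
  qed
qed

end
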